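(* Let $1<p<\infty$, $n\ge1$, and let $f\in C([0,\infty))$, $g\in C^{0,1}([0,\infty))$ be strictly increasing with $f(0)=g(0)=0$. Let $F(s)=\int_0^s f(t)\,dt$ and $\Gamma(s)=\int_0^{2s}g(t)\,dt+\frac{p-1}{p}c\,s^p$ with $c=\big(\frac{p}{p-1}\big)^p n$, and assume $$\int_1^\infty\frac{ds}{\Gamma^{-1}(F(s))}<\infty.$$ Then for every sufficiently large $\bar v_0>0$ there exist $R\in(0,\infty)$ and an increasing function $\bar v$ on $[0,R)$ which is a strict supersolution of $$\big((v')^{p-1}\big)'+\frac{n-1}{r}(v')^{p-1}\le f(v)-g(v'),\qquad v(0)=\bar v_0,\quad v'(0)=0,$$ ceases to exist at $R$, and satisfies $\bar v(r)\to\infty$ as $r\to R$. *)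

theory Defs
  imports "HOL-Analysis.Analysis"
begin

definition KO_F :: "(real \<Rightarrow> real) \<Rightarrow> real \<Rightarrow> real" where
  "KO_F f s = integral {0..s} f"

definition KO_c :: "real \<Rightarrow> nat \<Rightarrow> real" where
  "KO_c p n = (p / (p - 1)) powr p * real n"

definition KO_Gamma :: "real \<Rightarrow> nat \<Rightarrow> (real \<Rightarrow> real) \<Rightarrow> real \<Rightarrow> real" where
  "KO_Gamma p n g s = integral {0..2 * s} g + (p - 1) / p * KO_c p n * s powr p"

definition KO_Gamma_inv :: "real \<Rightarrow> nat \<Rightarrow> (real \<Rightarrow> real) \<Rightarrow> real \<Rightarrow> real" where
  "KO_Gamma_inv p n g = inv_into {0..} (KO_Gamma p n g)"

definition strict_radial_supersol ::
  "real \<Rightarrow> nat \<Rightarrow> (real \<Rightarrow> real) \<Rightarrow> (real \<Rightarrow> real) \<Rightarrow> real \<Rightarrow> real \<Rightarrow> (real \<Rightarrow> real) \<Rightarrow> bool" where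
  "strict_radial_supersol p n f g v0 R v \<longleftrightarrow>
     (\<exists>v'. (\<forall>r\<in>{0..<R}. (v has_real_derivative v' r) (at r within {0..<R}))
         \<and> continuous_on {0..<R} v'
         \<and> (\<forall>r\<in>{0..<R}. v' r \<ge> 0)
         \<and> v 0 = v0 \<and> v' 0 = 0
         \<and> (\<forall>r\<in>{0<..<R}. \<exists>w'. ((\<lambda>s. v' s powr (p - 1)) has_real_derivative w') (at r)
               \<and> w' + (real n - 1) / r * v' r powr (p - 1) < f (v r) - g (v' r)))"

end

theory Submission
  imports Defs
begin

(* The supersolution is the solution of the first-order problem Gamma(v') = F(v) - F(v0), v(0) = v0,
   i.e. v' = psi(v) with psi(x) = Gamma^-1(F(x) - F(v0)).  It is the inverse of
   rho(x) = integral from v0 to x of 1/psi, and it blows up at R = sup rho, which is finite: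
   near v0 the singularity of 1/psi is integrable because Gamma(s) = O(s^min(p,2)), and
   for large x the Keller-Osserman condition applies since psi(x) >= Gamma^-1(F(x))/(v0 + 1).
   Differentiating Gamma(v') = F(v) - F(v0) gives ((v')^(p-1))' <= f(v)/c, because
   Gamma'(s) >= (p-1) c s^(p-1); the bounds r = rho(v) >= (v - v0)/v' and C s^p <= Gamma(s)
   give (n-1)/r (v')^(p-1) <= (n-1) f(v)/C; and s g(s) <= Gamma(s) gives g(v') <= f(v)/K as soon
   as psi(x) >= K (x - v0).  By the Keller-Osserman condition F grows faster than Gamma(K v),
   which together with Gamma(t s) <= t Gamma(s) yields this last bound for large v0.  The
   choice of c makes kappa = 1/c + (n-1)/C < 1, and K = 2/(1 - kappa) gives kappa + 1/K < 1,
   so the inequality is strict. *)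

lemma continuous_on_integral_atLeast:
  fixes u :: "real \<Rightarrow> real"
  assumes "\<And>b. u integrable_on {a..b}"
  shows "continuous_on {a..} (\<lambda>x. integral {a..x} u)"
  unfolding continuous_on_eq_continuous_within
proof
  fix x assume x: "x \<in> {a..}"
  have "continuous (at x within {a..x+1}) (\<lambda>x. integral {a..x} u)"
    using indefinite_integral_continuous_1[OF assms] x
    unfolding continuous_on_eq_continuous_within by auto
  moreover have "at x within {a..} = at x within {a..x+1}"
    by (rule at_within_nhd[where S="{..<x+1}"]) auto
  ultimately show "continuous (at x within {a..}) (\<lambda>x. integral {a..x} u)"
    by simp
qed

lemma integral_atLeast_has_real_derivative:
  fixes u :: "real \<Rightarrow> real"
  assumes "\<And>b. u integrable_on {a..b}" and "a < x" and "isCont u x"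
  shows "((\<lambda>y. integral {a..y} u) has_real_derivative u x) (at x)"
proof -
  have "((\<lambda>y. integral {a..y} u) has_vector_derivative u x) (at x within {a..x+1} - {})"
    by (rule integral_has_vector_derivative_continuous_at[OF assms(1)])
      (use assms(2,3) in \<open>auto intro: continuous_at_imp_continuous_at_within\<close>)
  then show ?thesis
    using \<open>a < x\<close> by (simp add: at_within_Icc_at has_real_derivative_iff_has_vector_derivative)
qed

lemma integral_ge_length_mult:
  fixes u :: "real \<Rightarrow> real"
  assumes "u integrable_on {a..b}" "a \<le> b" "\<And>x. x \<in> {a..b} \<Longrightarrow> m \<le> u x"
  shows "(b - a) * m \<le> integral {a..b} u"
proof -
  have "integral {a..b} (\<lambda>_. m) \<le> integral {a..b} u"
    by (rule integral_le) (use assms in auto)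
  then show ?thesis
    using assms by simp
qed

lemma integral_le_length_mult:
  fixes u :: "real \<Rightarrow> real"
  assumes "u integrable_on {a..b}" "a \<le> b" "\<And>x. x \<in> {a..b} \<Longrightarrow> u x \<le> M"
  shows "integral {a..b} u \<le> (b - a) * M"
proof -
  have "integral {a..b} u \<le> integral {a..b} (\<lambda>_. M)"
    by (rule integral_le) (use assms in auto)
  then show ?thesis
    using assms by simp
qed

lemma integrable_on_Icc_if_powr_bound:
  fixes u :: "real \<Rightarrow> real"
  assumes cont: "continuous_on {a<..b} u" and "a \<le> b" and e: "e > -1"
    and bound: "\<And>x. a < x \<Longrightarrow> x \<le> b \<Longrightarrow> \<bar>u x\<bar> \<le> M * (x - a) powr e"
  shows "u integrable_on {a..b}"
proof -
  have endpoint: "negligible ({a..b} - {a<..b} \<union> ({a<..b} - {a..b}))"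
    by (rule negligible_subset[of "{a}"]) auto
  have "(\<lambda>x. x powr e) integrable_on {0..b - a}"
    using integrable_on_powr_from_0[OF e] \<open>a \<le> b\<close> by simp
  then have "(\<lambda>x. (x - a) powr e) integrable_on {a..b}"
    using integrable_on_shift_cbox[of "\<lambda>x. (x - a) powr e" a 0 "b - a"]
    by (simp add: comp_def)
  from integrable_on_cmult_left[OF this, of M]
  have "(\<lambda>x. M * (x - a) powr e) integrable_on {a..b}"
    by simp
  then have majorant: "(\<lambda>x. M * (x - a) powr e) integrable_on {a<..b}"
    using integrable_spike_set_eq[OF endpoint] by blast
  have "u \<in> borel_measurable (lebesgue_on {a<..b})"
    using continuous_imp_measurable_on_sets_lebesgue[OF cont] by simp
  then have "u integrable_on {a<..b}"
    by (rule measurable_bounded_by_integrable_imp_integrable_real[OF _ majorant]) (auto intro: bound)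
  then show ?thesis
    using integrable_spike_set_eq[OF endpoint] by blast
qed

lemma continuous_on_inv_into_interval:
  fixes h :: "real \<Rightarrow> real"
  assumes "is_interval S" "continuous_on S h" "inj_on h S"
  shows "continuous_on (h ` S) (inv_into S h)"
proof -
  obtain k where k: "homeomorphism S (h ` S) h k"
    using homeomorphism_into_1d[of S h] assms is_interval_path_connected by blast
  have "k y = inv_into S h y" if "y \<in> h ` S" for y
  proof -
    have "k y \<in> S" "h (k y) = y"
      using k that by (auto simp: homeomorphism_def)
    then show ?thesis
      using inv_into_f_f[OF \<open>inj_on h S\<close>] by metis
  qed
  then show ?thesis
    using continuous_on_eq[OF homeomorphism_cont2[OF k]] by blast
qed

lemma inv_into_has_real_derivative:
  fixes h :: "real \<Rightarrow> real"
  assumes "is_interval S" "continuous_on S h" "inj_on h S" and y: "y \<in> interior (h ` S)"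
    and deriv: "(h has_real_derivative D) (at (inv_into S h y))" and "D \<noteq> 0"
  shows "(inv_into S h has_real_derivative inverse D) (at y)"
proof (rule has_field_derivative_inverse_basic[where g = "inv_into S h" and t = "interior (h ` S)"])
  show "(h has_real_derivative D) (at (inv_into S h y))" "D \<noteq> 0" "open (interior (h ` S))"
    "y \<in> interior (h ` S)"
    using deriv \<open>D \<noteq> 0\<close> y by simp_all
  show "continuous (at y) (inv_into S h)"
    using continuous_on_interior[OF continuous_on_inv_into_interval[OF assms(1-3)] y] .
  show "h (inv_into S h z) = z" if "z \<in> interior (h ` S)" for z
    using that interior_subset by (blast intro: f_inv_into_f)
qed

lemma scale_le_of_deriv_mono:
  fixes G G' :: "real \<Rightarrow> real"
  assumes cont: "continuous_on {0..} G" and G0: "G 0 = 0"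
    and deriv: "\<And>s. s > 0 \<Longrightarrow> (G has_real_derivative G' s) (at s)"
    and mono: "\<And>s t. 0 < s \<Longrightarrow> s \<le> t \<Longrightarrow> G' s \<le> G' t"
    and t: "0 \<le> t" "t \<le> 1" and s: "0 \<le> s"
  shows "G (t * s) \<le> t * G s"
proof (cases "t * s = 0 \<or> t = 1")
  case True
  then show ?thesis
    using G0 by auto
next
  case False
  define a where "a = t * s"
  have a: "0 < a" "a < s"
    using False t s by (auto simp: a_def less_le mult_le_cancel_right1)
  \<comment> \<open>mean value theorem twice: G a / a \<le> G' a \<le> (G s - G a) / (s - a)\<close>
  obtain l z where z: "0 < z" "z < a" "(G has_real_derivative l) (at z)" "G a - G 0 = (a - 0) * l"
    using MVT[OF \<open>0 < a\<close> continuous_on_subset[OF cont]] deriv real_differentiable_def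
    by (metis atLeastAtMost_iff atLeast_iff subsetI)
  have "l = G' z"
    using z deriv DERIV_unique by blast
  then have below: "G a \<le> a * G' a"
    using z G0 mono[of z a] a by (simp add: mult_left_mono)
  obtain z' where z': "a < z'" "z' < s" "G s - G a = (s - a) * G' z'"
    using MVT2[OF \<open>a < s\<close>, of G G'] deriv a by auto
  have above: "(s - a) * G' a \<le> G s - G a"
    using z' mono[of a z'] a by (simp add: mult_left_mono)
  have "s * G a = a * G a + (s - a) * G a"
    by (simp add: algebra_simps)
  also have "\<dots> \<le> a * G a + (s - a) * (a * G' a)"
    using below a by (intro add_left_mono mult_left_mono) auto
  also have "\<dots> \<le> a * G a + a * (G s - G a)"
    using above a by (simp add: mult.left_commute mult_left_mono)
  finally have "s * G a \<le> a * G s"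
    by (simp add: algebra_simps)
  then show ?thesis
    using a by (simp add: a_def field_simps)
qed

lemma integral_tail_le:
  fixes h :: "real \<Rightarrow> real"
  assumes int: "h integrable_on {a..}" and nonneg: "\<And>x. a \<le> x \<Longrightarrow> 0 \<le> h x" and "e > 0"
  obtains A where "A \<ge> a" "\<And>b c. A \<le> b \<Longrightarrow> b \<le> c \<Longrightarrow> integral {b..c} h \<le> e"
proof -
  define I where "I b = integral {a..b} h" for b
  have int_Icc: "h integrable_on {b..c}" if "a \<le> b" for b c
    using integrable_on_subinterval[OF int] that by auto
  have I_le: "I b \<le> integral {a..} h" for b
    unfolding I_def using int int_Icc nonneg by (intro integral_subset_le) auto
  have I_diff: "integral {b..c} h = I c - I b" if "a \<le> b" "b \<le> c" for b c
    unfolding I_def using Henstock_Kurzweil_Integration.integral_combine[OF that int_Icc] by simp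
  have bdd: "bdd_above (I ` {a..})"
    using I_le by (intro bdd_aboveI[where M = "integral {a..} h"]) auto
  obtain A where A: "A \<ge> a" "Sup (I ` {a..}) - e < I A"
    using less_cSupD[of "I ` {a..}" "Sup (I ` {a..}) - e"] \<open>e > 0\<close> by auto
  show ?thesis
  proof
    fix b c assume "A \<le> b" "b \<le> c"
    moreover have "I c \<le> Sup (I ` {a..})"
      using bdd A \<open>A \<le> b\<close> \<open>b \<le> c\<close> by (intro cSup_upper) auto
    moreover have "0 \<le> integral {A..b} h"
      using int_Icc A \<open>A \<le> b\<close> nonneg by (intro integral_nonneg) auto
    then have "I A \<le> I b"
      using I_diff[of A b] A \<open>A \<le> b\<close> by simp
    ultimately show "integral {b..c} h \<le> e"
      using I_diff[of b c] A by simp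
  qed (use A in simp)
qed

lemma superlinear_if_inverse_integrable:
  fixes \<phi> :: "real \<Rightarrow> real"
  assumes int: "(\<lambda>s. 1 / \<phi> s) integrable_on {a..}" and pos: "\<And>s. a \<le> s \<Longrightarrow> 0 < \<phi> s"
    and mono: "mono_on {a..} \<phi>" and "M > 0"
  shows "\<forall>\<^sub>F v in at_top. M * v \<le> \<phi> v"
proof -
  obtain A where A: "A \<ge> a"
    and tail: "\<And>b c. A \<le> b \<Longrightarrow> b \<le> c \<Longrightarrow> integral {b..c} (\<lambda>s. 1 / \<phi> s) \<le> 1 / (2 * M)"
    using integral_tail_le[OF int, of "1 / (2 * M)"] pos \<open>M > 0\<close> by (auto simp: less_imp_le)
  have "M * v \<le> \<phi> v" if v: "v \<ge> 2 * max A 1" for v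
  proof -
    have v2: "a \<le> v / 2" "A \<le> v / 2" "0 < v"
      using A v by auto
    have "(v - v / 2) * (1 / \<phi> v) \<le> integral {v / 2..v} (\<lambda>s. 1 / \<phi> s)"
    proof (rule integral_ge_length_mult)
      show "(\<lambda>s. 1 / \<phi> s) integrable_on {v / 2..v}"
        using integrable_on_subinterval[OF int, of "v / 2" v] v2 by auto
      show "1 / \<phi> v \<le> 1 / \<phi> x" if "x \<in> {v / 2..v}" for x
        using that v2 pos[of x] mono_onD[OF mono, of x v] by (intro divide_left_mono) auto
    qed (use v2 in auto)
    also have "\<dots> \<le> 1 / (2 * M)"
      using tail v2 by simp
    finally have "v / 2 / \<phi> v \<le> 1 / (2 * M)"
      by simp
    then show ?thesis
      using pos[of v] v2 \<open>M > 0\<close> by (simp add: field_simps)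
  qed
  then show ?thesis
    unfolding eventually_at_top_linorder by blast
qed

locale keller_osserman_setting =
  fixes p :: real and n :: nat and f g :: "real \<Rightarrow> real"
  assumes p: "1 < p" and n: "n \<ge> 1"
    and f_cont: "continuous_on {0..} f" and f_strict_mono: "strict_mono_on {0..} f" and f0: "f 0 = 0"
    and g_lipschitz: "\<exists>L. L-lipschitz_on {0..} g"
    and g_strict_mono: "strict_mono_on {0..} g" and g0: "g 0 = 0"
begin

abbreviation F where "F \<equiv> KO_F f"
abbreviation \<Gamma> where "\<Gamma> \<equiv> KO_Gamma p n g"
abbreviation \<Gamma>_inv where "\<Gamma>_inv \<equiv> KO_Gamma_inv p n g"
abbreviation c where "c \<equiv> KO_c p n"

definition C where "C = (p - 1) / p * c"
definition \<Gamma>' where "\<Gamma>' s = 2 * g (2 * s) + (p - 1) * c * s powr (p - 1)"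

lemma c_pos: "c > 0"
  unfolding KO_c_def using p n by auto

lemma C_pos: "C > 0"
  unfolding C_def using p c_pos by auto

lemma f_less: "0 \<le> x \<Longrightarrow> x < y \<Longrightarrow> f x < f y"
  by (intro strict_mono_onD[OF f_strict_mono]) auto

lemma f_pos: "0 < x \<Longrightarrow> 0 < f x"
  using f_less[of 0 x] f0 by simp

lemma f_mono: "0 \<le> x \<Longrightarrow> x \<le> y \<Longrightarrow> f x \<le> f y"
  using f_less[of x y] by (cases "x = y") auto

lemma g_less: "0 \<le> x \<Longrightarrow> x < y \<Longrightarrow> g x < g y"
  by (intro strict_mono_onD[OF g_strict_mono]) auto

lemma g_pos: "0 < x \<Longrightarrow> 0 < g x"
  using g_less[of 0 x] g0 by simp

lemma g_mono: "0 \<le> x \<Longrightarrow> x \<le> y \<Longrightarrow> g x \<le> g y"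
  using g_less[of x y] by (cases "x = y") auto

lemma g_nonneg: "0 \<le> x \<Longrightarrow> 0 \<le> g x"
  using g_mono[of 0 x] g0 by simp

lemma g_cont: "continuous_on {0..} g"
  using g_lipschitz lipschitz_on_continuous_on by blast

lemma f_integrable: "f integrable_on {a..b}" if "0 \<le> a"
  using that by (intro integrable_continuous_interval continuous_on_subset[OF f_cont]) auto

lemma g_integrable: "g integrable_on {a..b}" if "0 \<le> a"
  using that by (intro integrable_continuous_interval continuous_on_subset[OF g_cont]) auto

lemma F_0 [simp]: "F 0 = 0"
  unfolding KO_F_def by simp

lemma continuous_on_F: "continuous_on {0..} F"
  unfolding KO_F_def[abs_def] using f_integrable by (intro continuous_on_integral_atLeast) auto

lemma F_has_real_derivative: "0 < s \<Longrightarrow> (F has_real_derivative f s) (at s)"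
  unfolding KO_F_def[abs_def] using f_integrable
  by (intro integral_atLeast_has_real_derivative continuous_on_interior[OF f_cont]) auto

lemma F_diff_eq: "0 \<le> a \<Longrightarrow> a \<le> b \<Longrightarrow> F b - F a = integral {a..b} f"
  unfolding KO_F_def
  using Henstock_Kurzweil_Integration.integral_combine[of 0 a b f] f_integrable[of 0 b] by simp

lemma F_diff_ge: "0 \<le> a \<Longrightarrow> a \<le> b \<Longrightarrow> (b - a) * f a \<le> F b - F a"
  using F_diff_eq integral_ge_length_mult[OF f_integrable, of a b "f a"] f_mono by auto

lemma F_diff_le: "0 \<le> a \<Longrightarrow> a \<le> b \<Longrightarrow> F b - F a \<le> (b - a) * f b"
  using F_diff_eq integral_le_length_mult[OF f_integrable, of a b "f b"] f_mono by auto

lemma F_le: "0 \<le> b \<Longrightarrow> F b \<le> b * f b"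
  using F_diff_le[of 0 b] by simp

lemma F_mono: "0 \<le> a \<Longrightarrow> a \<le> b \<Longrightarrow> F a \<le> F b"
  using F_diff_ge[of a b] f_mono[of 0 a] f0 by (smt (verit) mult_nonneg_nonneg)

lemma F_pos: "0 < b \<Longrightarrow> 0 < F b"
proof -
  assume "0 < b"
  then have "0 < b * f (b / 2)"
    using f_pos[of "b / 2"] by simp
  then show ?thesis
    using F_diff_ge[of "b / 2" b] F_mono[of 0 "b / 2"] \<open>0 < b\<close> by simp
qed

lemma \<Gamma>_eq: "\<Gamma> s = integral {0..2 * s} g + C * s powr p"
  unfolding KO_Gamma_def C_def by simp

lemma \<Gamma>_0 [simp]: "\<Gamma> 0 = 0"
  unfolding \<Gamma>_eq using p by simp

lemma continuous_on_\<Gamma>: "continuous_on {0..} \<Gamma>"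
proof -
  have "continuous_on {0..} (\<lambda>s. integral {0..s} g)"
    using g_integrable by (intro continuous_on_integral_atLeast) auto
  then have "continuous_on {0..} (\<lambda>s. integral {0..2 * s} g)"
    by (rule continuous_on_compose2) (auto intro!: continuous_intros)
  moreover have "continuous_on {0..} (\<lambda>s::real. s powr p)"
    using p by (intro continuous_on_powr') (auto intro: continuous_intros)
  ultimately show ?thesis
    unfolding \<Gamma>_eq[abs_def] by (auto intro!: continuous_intros)
qed

lemma \<Gamma>_has_real_derivative: "0 < s \<Longrightarrow> (\<Gamma> has_real_derivative \<Gamma>' s) (at s)"
proof -
  assume s: "0 < s"
  have "((\<lambda>s. integral {0..s} g) has_real_derivative g (2 * s)) (at (2 * s))"
    using g_integrable s
    by (intro integral_atLeast_has_real_derivative continuous_on_interior[OF g_cont]) auto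
  moreover have "((\<lambda>s. 2 * s) has_real_derivative 2) (at s)"
    by (auto intro!: derivative_eq_intros)
  ultimately have "((\<lambda>s. integral {0..2 * s} g) has_real_derivative g (2 * s) * 2) (at s)"
    by (rule DERIV_chain2)
  then have "(\<Gamma> has_real_derivative g (2 * s) * 2 + C * (p * s powr (p - 1))) (at s)"
    unfolding \<Gamma>_eq[abs_def] using s by (auto intro!: derivative_eq_intros)
  moreover have "g (2 * s) * 2 + C * (p * s powr (p - 1)) = \<Gamma>' s"
    unfolding \<Gamma>'_def C_def using p by (simp add: field_simps)
  ultimately show ?thesis
    by simp
qed

lemma \<Gamma>'_pos: "0 < s \<Longrightarrow> 0 < \<Gamma>' s"
  unfolding \<Gamma>'_def using g_pos[of "2 * s"] c_pos p by (auto intro!: add_pos_pos)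

lemma \<Gamma>'_mono: "0 < s \<Longrightarrow> s \<le> t \<Longrightarrow> \<Gamma>' s \<le> \<Gamma>' t"
  unfolding \<Gamma>'_def using g_mono[of "2 * s" "2 * t"] c_pos p
  by (auto intro!: add_mono mult_left_mono powr_mono2)

lemma \<Gamma>_less: "0 \<le> a \<Longrightarrow> a < b \<Longrightarrow> \<Gamma> a < \<Gamma> b"
proof -
  assume ab: "0 \<le> a" "a < b"
  have "integral {0..2 * a} g \<le> integral {0..2 * b} g"
    using ab g_integrable g_nonneg by (intro integral_subset_le) auto
  moreover have "C * a powr p < C * b powr p"
    using ab p C_pos by (simp add: powr_less_mono2)
  ultimately show ?thesis
    unfolding \<Gamma>_eq by simp
qed

lemma \<Gamma>_strict_mono: "strict_mono_on {0..} \<Gamma>"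
  by (auto intro!: strict_mono_onI \<Gamma>_less)

lemma \<Gamma>_mono: "0 \<le> a \<Longrightarrow> a \<le> b \<Longrightarrow> \<Gamma> a \<le> \<Gamma> b"
  using \<Gamma>_less[of a b] by (cases "a = b") auto

lemma \<Gamma>_nonneg: "0 \<le> s \<Longrightarrow> 0 \<le> \<Gamma> s"
  using \<Gamma>_mono[of 0 s] by simp

lemma \<Gamma>_ge_powr: "0 \<le> s \<Longrightarrow> C * s powr p \<le> \<Gamma> s"
proof -
  assume "0 \<le> s"
  have "0 \<le> integral {0..2 * s} g"
    using g_integrable g_nonneg by (intro integral_nonneg) auto
  then show ?thesis
    unfolding \<Gamma>_eq by simp
qed

lemma \<Gamma>_ge_mult_g: "0 \<le> s \<Longrightarrow> s * g s \<le> \<Gamma> s"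
proof -
  assume s: "0 \<le> s"
  have "integral {0..2 * s} g = integral {0..s} g + integral {s..2 * s} g"
    using Henstock_Kurzweil_Integration.integral_combine[of 0 s "2 * s" g] s g_integrable by simp
  moreover have "(2 * s - s) * g s \<le> integral {s..2 * s} g"
    using s g_integrable g_mono by (intro integral_ge_length_mult) auto
  moreover have "0 \<le> integral {0..s} g"
    using g_integrable g_nonneg by (intro integral_nonneg) auto
  moreover have "0 \<le> C * s powr p"
    using C_pos by simp
  ultimately show ?thesis
    unfolding \<Gamma>_eq by simp
qed

lemma \<Gamma>_scale_le: "0 \<le> t \<Longrightarrow> t \<le> 1 \<Longrightarrow> 0 \<le> s \<Longrightarrow> \<Gamma> (t * s) \<le> t * \<Gamma> s"
  by (rule scale_le_of_deriv_mono[OF continuous_on_\<Gamma> \<Gamma>_0 \<Gamma>_has_real_derivative \<Gamma>'_mono])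

lemma \<Gamma>_image: "\<Gamma> ` {0..} = {0..}"
proof
  show "\<Gamma> ` {0..} \<subseteq> {0..}"
    using \<Gamma>_nonneg by auto
  show "{0..} \<subseteq> \<Gamma> ` {0..}"
  proof
    fix y :: real assume y: "y \<in> {0..}"
    define b where "b = max 1 (y / g 1)"
    have "y / g 1 * g 1 \<le> b * g 1"
      using g_pos[of 1] by (intro mult_right_mono) (auto simp: b_def)
    then have "y \<le> b * g 1"
      using g_pos[of 1] by simp
    also have "\<dots> \<le> b * g b"
      using g_mono[of 1 b] by (intro mult_left_mono) (auto simp: b_def)
    also have "\<dots> \<le> \<Gamma> b"
      using \<Gamma>_ge_mult_g[of b] by (simp add: b_def)
    finally obtain x where "0 \<le> x" "x \<le> b" "\<Gamma> x = y"
      using IVT'[of \<Gamma> 0 y b] y continuous_on_subset[OF continuous_on_\<Gamma>] by (force simp: b_def)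
    then show "y \<in> \<Gamma> ` {0..}"
      by auto
  qed
qed

lemma \<Gamma>_le_iff: "0 \<le> a \<Longrightarrow> 0 \<le> b \<Longrightarrow> \<Gamma> a \<le> \<Gamma> b \<longleftrightarrow> a \<le> b"
  using \<Gamma>_less[of b a] \<Gamma>_mono[of a b] by (auto simp: not_le[symmetric])

lemma \<Gamma>_inv_\<Gamma> [simp]: "0 \<le> s \<Longrightarrow> \<Gamma>_inv (\<Gamma> s) = s"
  unfolding KO_Gamma_inv_def
  using strict_mono_on_imp_inj_on[OF \<Gamma>_strict_mono] by (simp add: inv_into_f_f)

lemma \<Gamma>_\<Gamma>_inv [simp]: "0 \<le> y \<Longrightarrow> \<Gamma> (\<Gamma>_inv y) = y"
  unfolding KO_Gamma_inv_def using \<Gamma>_image by (metis atLeast_iff f_inv_into_f)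

lemma \<Gamma>_inv_nonneg: "0 \<le> y \<Longrightarrow> 0 \<le> \<Gamma>_inv y"
  unfolding KO_Gamma_inv_def using \<Gamma>_image by (metis atLeast_iff inv_into_into)

lemma le_\<Gamma>_inv_iff: "0 \<le> y \<Longrightarrow> 0 \<le> s \<Longrightarrow> s \<le> \<Gamma>_inv y \<longleftrightarrow> \<Gamma> s \<le> y"
  using \<Gamma>_le_iff[of s "\<Gamma>_inv y"] \<Gamma>_inv_nonneg by simp

lemma \<Gamma>_inv_mono: "0 \<le> x \<Longrightarrow> x \<le> y \<Longrightarrow> \<Gamma>_inv x \<le> \<Gamma>_inv y"
  using le_\<Gamma>_inv_iff[of y "\<Gamma>_inv x"] \<Gamma>_inv_nonneg by simp

lemma \<Gamma>_inv_0 [simp]: "\<Gamma>_inv 0 = 0"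
  using \<Gamma>_inv_\<Gamma>[of 0] by simp

lemma \<Gamma>_inv_pos: "0 < y \<Longrightarrow> 0 < \<Gamma>_inv y"
  using \<Gamma>_inv_nonneg[of y] \<Gamma>_\<Gamma>_inv[of y] by (cases "\<Gamma>_inv y = 0") auto

lemma continuous_on_\<Gamma>_inv: "continuous_on {0..} \<Gamma>_inv"
  using continuous_on_inv_into_interval[OF _ continuous_on_\<Gamma> strict_mono_on_imp_inj_on[OF \<Gamma>_strict_mono]]
  unfolding KO_Gamma_inv_def \<Gamma>_image by (simp add: is_interval_ci)

lemma \<Gamma>_inv_has_real_derivative:
  assumes "0 < y"
  shows "(\<Gamma>_inv has_real_derivative inverse (\<Gamma>' (\<Gamma>_inv y))) (at y)"
  unfolding KO_Gamma_inv_def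
proof (rule inv_into_has_real_derivative[OF _ continuous_on_\<Gamma>])
  show "inj_on \<Gamma> {0..}"
    using \<Gamma>_strict_mono strict_mono_on_imp_inj_on by blast
  show "y \<in> interior (\<Gamma> ` {0..})"
    using assms by (simp add: \<Gamma>_image)
  show "(\<Gamma> has_real_derivative \<Gamma>' (inv_into {0..} \<Gamma> y)) (at (inv_into {0..} \<Gamma> y))"
    using \<Gamma>_has_real_derivative \<Gamma>_inv_pos[OF assms] unfolding KO_Gamma_inv_def by simp
  show "\<Gamma>' (inv_into {0..} \<Gamma> y) \<noteq> 0"
    using \<Gamma>'_pos \<Gamma>_inv_pos[OF assms] unfolding KO_Gamma_inv_def by (simp add: less_imp_neq[symmetric])
qed (simp add: is_interval_ci)

lemma \<Gamma>_inv_div_le: "1 \<le> m \<Longrightarrow> 0 \<le> y \<Longrightarrow> \<Gamma>_inv y / m \<le> \<Gamma>_inv (y / m)"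
proof -
  assume m: "1 \<le> m" and y: "0 \<le> y"
  have "\<Gamma> ((1 / m) * \<Gamma>_inv y) \<le> (1 / m) * \<Gamma> (\<Gamma>_inv y)"
    using m y \<Gamma>_inv_nonneg by (intro \<Gamma>_scale_le) auto
  then show ?thesis
    using le_\<Gamma>_inv_iff[of "y / m" "\<Gamma>_inv y / m"] m y \<Gamma>_inv_nonneg by simp
qed

lemma \<Gamma>_le_powr_near_0: "\<exists>A>0. \<forall>s\<in>{0..1}. \<Gamma> s \<le> A * s powr min p 2"
proof -
  obtain L where L: "L-lipschitz_on {0..} g"
    using g_lipschitz by blast
  have "L \<ge> 0"
    using L lipschitz_on_nonneg by blast
  have "\<Gamma> s \<le> (4 * L + C) * s powr min p 2" if s: "0 \<le> s" "s \<le> 1" for s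
  proof -
    have "integral {0..2 * s} g \<le> (2 * s - 0) * g (2 * s)"
      using s g_integrable g_mono by (intro integral_le_length_mult) auto
    also have "\<dots> \<le> 2 * s * (L * (2 * s))"
    proof -
      have "g (2 * s) \<le> L * (2 * s)"
        using lipschitz_onD[OF L, of "2 * s" 0] g0 g_nonneg[of "2 * s"] s by (simp add: dist_real_def)
      then have "2 * s * g (2 * s) \<le> 2 * s * (L * (2 * s))"
        using s by (intro mult_left_mono) auto
      then show ?thesis
        by simp
    qed
    also have "\<dots> = 4 * L * s powr 2"
      using s by (cases "s = 0") (simp_all add: powr_numeral power2_eq_square)
    also have "\<dots> \<le> 4 * L * s powr min p 2"
      using \<open>L \<ge> 0\<close> s p by (intro mult_left_mono powr_mono') auto
    finally have "integral {0..2 * s} g \<le> 4 * L * s powr min p 2" .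
    moreover have "C * s powr p \<le> C * s powr min p 2"
      using C_pos s p by (intro mult_left_mono powr_mono') auto
    ultimately show ?thesis
      unfolding \<Gamma>_eq by (simp add: algebra_simps)
  qed
  moreover have "4 * L + C > 0"
    using \<open>L \<ge> 0\<close> C_pos by simp
  ultimately show ?thesis
    by auto
qed

lemma powr_div_\<Gamma>'_le: "0 < s \<Longrightarrow> 0 \<le> y \<Longrightarrow> (p - 1) * s powr (p - 1) * y / \<Gamma>' s \<le> y / c"
proof -
  assume s: "0 < s" and y: "0 \<le> y"
  have pos: "0 < (p - 1) * s powr (p - 1)"
    using p s by simp
  have "(p - 1) * s powr (p - 1) * c \<le> \<Gamma>' s"
    unfolding \<Gamma>'_def using g_nonneg[of "2 * s"] s by (simp add: mult_ac)
  then have "(p - 1) * s powr (p - 1) * y / \<Gamma>' s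
      \<le> (p - 1) * s powr (p - 1) * y / ((p - 1) * s powr (p - 1) * c)"
    using pos c_pos y \<Gamma>'_pos[OF s] by (intro divide_left_mono) auto
  also have "\<dots> = y / c"
    by (rule mult_divide_mult_cancel_left) (use pos in auto)
  finally show ?thesis .
qed

definition \<kappa> where "\<kappa> = 1 / c + (real n - 1) / C"
definition K where "K = 2 / (1 - \<kappa>)"

lemma \<kappa>_less_1: "\<kappa> < 1"
proof -
  have "(p / (p - 1)) powr 1 \<le> (p / (p - 1)) powr p"
    using p by (intro powr_mono) auto
  then have "p / (p - 1) * real n \<le> c"
    unfolding KO_c_def using p n by (intro mult_right_mono) auto
  then have "p * real n \<le> (p - 1) * c"
    using p by (simp add: field_simps)
  moreover have "\<kappa> * ((p - 1) * c) = (p - 1) + (real n - 1) * p"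
    unfolding \<kappa>_def C_def using p c_pos by (simp add: field_simps)
  ultimately have "\<kappa> * ((p - 1) * c) < (p - 1) * c"
    by (simp add: algebra_simps)
  then show ?thesis
    using p c_pos by simp
qed

lemma K_pos: "0 < K"
  unfolding K_def using \<kappa>_less_1 by simp

lemma \<kappa>_plus_inverse_K_less_1: "\<kappa> + 1 / K < 1"
  unfolding K_def using \<kappa>_less_1 by (simp add: field_simps)


lemma \<Gamma>_le_F_increment_if_growth:
  assumes "0 < M" and V: "\<And>v. V \<le> v \<Longrightarrow> \<Gamma> (2 * M * v) \<le> F v"
    and v0: "max V 1 \<le> v0" and t: "0 \<le> t"
  shows "\<Gamma> (M * t) \<le> F (v0 + t) - F v0"
proof -
  have "0 < v0"
    using v0 by simp
  have F_increment: "t * f v0 \<le> F (v0 + t) - F v0"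
    using F_diff_ge[of v0 "v0 + t"] t \<open>0 < v0\<close> by simp
  show ?thesis
  proof (cases "t \<le> v0")
    case True
    have "\<Gamma> (M * t) = \<Gamma> ((t / v0) * (M * v0))"
      using \<open>0 < v0\<close> by (simp add: mult.commute)
    also have "\<dots> \<le> (t / v0) * \<Gamma> (M * v0)"
      using True t \<open>0 < v0\<close> \<open>0 < M\<close> by (intro \<Gamma>_scale_le) auto
    also have "\<dots> \<le> (t / v0) * \<Gamma> (2 * M * v0)"
      using t \<open>0 < v0\<close> \<open>0 < M\<close> by (intro mult_left_mono \<Gamma>_mono) auto
    also have "\<dots> \<le> (t / v0) * (v0 * f v0)"
      using V[of v0] F_le[of v0] t v0 by (intro mult_left_mono) auto
    also have "\<dots> = t * f v0"
      using \<open>0 < v0\<close> by simp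
    finally show ?thesis
      using F_increment by simp
  next
    case False
    have "F v0 \<le> v0 * f v0"
      using F_le \<open>0 < v0\<close> by simp
    also have "\<dots> \<le> t * f v0"
      using False f_pos[OF \<open>0 < v0\<close>] by (intro mult_right_mono) auto
    finally have "F v0 \<le> F (v0 + t) - F v0"
      using F_increment by simp
    have "\<Gamma> (M * t) \<le> \<Gamma> ((1 / 2) * (2 * M * (v0 + t)))"
      using t \<open>0 < v0\<close> \<open>0 < M\<close> by (intro \<Gamma>_mono) auto
    also have "\<dots> \<le> (1 / 2) * \<Gamma> (2 * M * (v0 + t))"
      using t \<open>0 < v0\<close> \<open>0 < M\<close> by (intro \<Gamma>_scale_le) auto
    also have "\<dots> \<le> (1 / 2) * F (v0 + t)"
      using V[of "v0 + t"] v0 t by simp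
    finally show ?thesis
      using \<open>F v0 \<le> F (v0 + t) - F v0\<close> by simp
  qed
qed

end

locale keller_osserman = keller_osserman_setting +
  assumes integrable_inverse: "(\<lambda>s. 1 / KO_Gamma_inv p n g (KO_F f s)) integrable_on {1..}"
begin

lemma eventually_\<Gamma>_le_F: "0 < M \<Longrightarrow> \<forall>\<^sub>F v in at_top. \<Gamma> (M * v) \<le> F v"
proof -
  assume "0 < M"
  have "mono_on {1..} (\<lambda>s. \<Gamma>_inv (F s))"
    using \<Gamma>_inv_mono F_mono F_pos by (intro mono_onI) (auto simp: less_imp_le)
  then have "\<forall>\<^sub>F v in at_top. M * v \<le> \<Gamma>_inv (F v)"
    using \<Gamma>_inv_pos F_pos \<open>0 < M\<close> by (intro superlinear_if_inverse_integrable[OF integrable_inverse]) auto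
  moreover have "\<forall>\<^sub>F v in at_top. 0 < (v::real)"
    by (rule eventually_gt_at_top)
  ultimately show ?thesis
    by eventually_elim (use le_\<Gamma>_inv_iff F_pos \<open>0 < M\<close> in \<open>auto simp: less_imp_le\<close>)
qed

lemma \<Gamma>_le_F_increment:
  assumes "0 < M"
  obtains V where "0 < V" "\<And>v0 t. V \<le> v0 \<Longrightarrow> 0 \<le> t \<Longrightarrow> \<Gamma> (M * t) \<le> F (v0 + t) - F v0"
proof -
  obtain V where V: "\<And>v. V \<le> v \<Longrightarrow> \<Gamma> (2 * M * v) \<le> F v"
    using eventually_\<Gamma>_le_F[of "2 * M"] \<open>0 < M\<close> by (auto simp: eventually_at_top_linorder)
  show ?thesis
  proof (rule that[of "max V 1"])
    fix v0 t :: real assume "max V 1 \<le> v0" "0 \<le> t"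
    then show "\<Gamma> (M * t) \<le> F (v0 + t) - F v0"
      using \<Gamma>_le_F_increment_if_growth[OF \<open>0 < M\<close> V] by blast
  qed simp
qed

end

locale keller_osserman_profile = keller_osserman +
  fixes v0 :: real
  assumes v0_pos: "0 < v0"
    and \<Gamma>_K_le_F_increment: "\<And>t. 0 \<le> t \<Longrightarrow> \<Gamma> (K * t) \<le> F (v0 + t) - F v0"
begin

definition \<psi> where "\<psi> x = \<Gamma>_inv (F x - F v0)"

lemma F_increment_nonneg: "v0 \<le> x \<Longrightarrow> 0 \<le> F x - F v0"
  using F_mono[of v0 x] v0_pos by simp

lemma F_increment_pos: "v0 < x \<Longrightarrow> 0 < F x - F v0"
proof -
  assume "v0 < x"
  then have "0 < (x - v0) * f v0"
    using f_pos[OF v0_pos] by simp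
  then show ?thesis
    using F_diff_ge[of v0 x] v0_pos \<open>v0 < x\<close> by simp
qed

lemma \<psi>_v0 [simp]: "\<psi> v0 = 0"
  unfolding \<psi>_def by simp

lemma \<psi>_pos: "v0 < x \<Longrightarrow> 0 < \<psi> x"
  unfolding \<psi>_def using F_increment_pos by (intro \<Gamma>_inv_pos)

lemma \<psi>_nonneg: "v0 \<le> x \<Longrightarrow> 0 \<le> \<psi> x"
  unfolding \<psi>_def using F_increment_nonneg \<Gamma>_inv_nonneg by simp

lemma \<Gamma>_\<psi>: "v0 \<le> x \<Longrightarrow> \<Gamma> (\<psi> x) = F x - F v0"
  unfolding \<psi>_def using F_increment_nonneg by simp

lemma \<psi>_mono: "v0 \<le> x \<Longrightarrow> x \<le> y \<Longrightarrow> \<psi> x \<le> \<psi> y"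
  unfolding \<psi>_def using F_increment_nonneg F_mono[of x y] v0_pos by (intro \<Gamma>_inv_mono) auto

lemma continuous_on_\<psi>: "continuous_on {v0..} \<psi>"
  unfolding \<psi>_def[abs_def]
proof (rule continuous_on_compose2[OF continuous_on_\<Gamma>_inv])
  show "continuous_on {v0..} (\<lambda>x. F x - F v0)"
    using v0_pos by (intro continuous_intros continuous_on_subset[OF continuous_on_F]) auto
qed (use F_increment_nonneg in auto)

lemma \<psi>_has_real_derivative: "v0 < x \<Longrightarrow> (\<psi> has_real_derivative f x / \<Gamma>' (\<psi> x)) (at x)"
proof -
  assume x: "v0 < x"
  have "(\<Gamma>_inv has_real_derivative inverse (\<Gamma>' (\<psi> x))) (at (F x - F v0))"
    unfolding \<psi>_def using F_increment_pos[OF x] by (rule \<Gamma>_inv_has_real_derivative)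
  moreover have "((\<lambda>x. F x - F v0) has_real_derivative f x) (at x)"
    using F_has_real_derivative[of x] x v0_pos by (auto intro!: derivative_eq_intros)
  ultimately show ?thesis
    unfolding \<psi>_def[abs_def] using DERIV_chain2 by (fastforce simp: field_simps)
qed

lemma \<psi>_ge_K: "v0 \<le> x \<Longrightarrow> K * (x - v0) \<le> \<psi> x"
  unfolding \<psi>_def
  using le_\<Gamma>_inv_iff[of "F x - F v0" "K * (x - v0)"] \<Gamma>_K_le_F_increment[of "x - v0"]
    F_increment_nonneg K_pos
  by simp

lemma \<psi>_ge_tail: "v0 + 1 \<le> x \<Longrightarrow> \<Gamma>_inv (F x) / (v0 + 1) \<le> \<psi> x"
proof -
  assume x: "v0 + 1 \<le> x"
  have "f v0 \<le> (x - v0) * f v0"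
    using f_pos[OF v0_pos] x by simp
  also have "\<dots> \<le> F x - F v0"
    using F_diff_ge[of v0 x] v0_pos x by simp
  finally have "v0 * f v0 \<le> v0 * (F x - F v0)"
    using v0_pos by simp
  then have "F x / (v0 + 1) \<le> F x - F v0"
    using F_le[of v0] v0_pos by (simp add: field_simps)
  moreover have "0 \<le> F x"
    using F_pos[of x] v0_pos x by simp
  ultimately have "\<Gamma>_inv (F x / (v0 + 1)) \<le> \<psi> x"
    unfolding \<psi>_def using v0_pos by (intro \<Gamma>_inv_mono) auto
  moreover have "\<Gamma>_inv (F x) / (v0 + 1) \<le> \<Gamma>_inv (F x / (v0 + 1))"
    using \<open>0 \<le> F x\<close> v0_pos by (intro \<Gamma>_inv_div_le) auto
  ultimately show ?thesis
    by simp
qed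

lemma \<psi>_ge_powr_near_v0:
  obtains \<mu> where "0 < \<mu>" "\<And>x. v0 < x \<Longrightarrow> x \<le> v0 + 1 \<Longrightarrow> \<mu> * (x - v0) powr (1 / min p 2) \<le> \<psi> x"
proof -
  define q where "q = min p 2"
  have q: "1 < q"
    using p by (simp add: q_def)
  obtain A where A: "0 < A" "\<And>s. 0 \<le> s \<Longrightarrow> s \<le> 1 \<Longrightarrow> \<Gamma> s \<le> A * s powr q"
    using \<Gamma>_le_powr_near_0 unfolding q_def by auto
  define \<mu> where "\<mu> = min 1 (f v0 / A)"
  have \<mu>: "0 < \<mu>" "\<mu> \<le> 1" "A * \<mu> \<le> f v0"
    unfolding \<mu>_def using f_pos[OF v0_pos] A by (auto simp: field_simps min_def)
  have "\<mu> * (x - v0) powr (1 / q) \<le> \<psi> x" if x: "v0 < x" "x \<le> v0 + 1" for x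
  proof -
    define t where "t = x - v0"
    have t: "0 < t" "t \<le> 1"
      using x by (auto simp: t_def)
    define s where "s = \<mu> * t powr (1 / q)"
    have "t powr (1 / q) \<le> 1"
      using powr_mono'[of 0 "1 / q" t] t q by simp
    then have s: "0 \<le> s" "s \<le> 1"
      using \<mu> by (auto simp: s_def mult_le_one)
    have "s powr q = \<mu> powr q * t"
      using \<mu> t q by (simp add: s_def powr_mult powr_powr)
    also have "\<dots> \<le> \<mu> * t"
      using powr_mono'[of 1 q \<mu>] \<mu> q t by (intro mult_right_mono) auto
    finally have "\<Gamma> s \<le> A * (\<mu> * t)"
      using A(2)[OF s] A(1) by (smt (verit) mult_left_mono)
    also have "\<dots> \<le> f v0 * t"
      using \<mu> t by (simp add: mult.assoc[symmetric] mult_right_mono)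
    also have "\<dots> \<le> F x - F v0"
      using F_diff_ge[of v0 x] x v0_pos by (simp add: t_def mult.commute)
    finally have "s \<le> \<psi> x"
      unfolding \<psi>_def using le_\<Gamma>_inv_iff F_increment_nonneg[of x] x s by simp
    then show ?thesis
      by (simp add: s_def t_def)
  qed
  then show ?thesis
    using that \<mu> unfolding q_def by blast
qed

definition \<rho> where "\<rho> x = integral {v0..x} (\<lambda>t. 1 / \<psi> t)"

lemma continuous_on_inverse_\<psi>: "continuous_on {v0<..} (\<lambda>t. 1 / \<psi> t)"
proof -
  have "\<forall>t\<in>{v0<..}. \<psi> t \<noteq> 0"
    using \<psi>_pos by force
  then show ?thesis
    by (intro continuous_intros continuous_on_subset[OF continuous_on_\<psi>]) auto
qed

lemma integrable_inverse_\<psi>: "(\<lambda>t. 1 / \<psi> t) integrable_on {v0..b}"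
proof -
  obtain \<mu> where \<mu>: "0 < \<mu>"
    and \<psi>_ge: "\<And>x. v0 < x \<Longrightarrow> x \<le> v0 + 1 \<Longrightarrow> \<mu> * (x - v0) powr (1 / min p 2) \<le> \<psi> x"
    using \<psi>_ge_powr_near_v0 by blast
  have near: "(\<lambda>t. 1 / \<psi> t) integrable_on {v0..v0 + 1}"
  proof (rule integrable_on_Icc_if_powr_bound)
    show "continuous_on {v0<..v0 + 1} (\<lambda>t. 1 / \<psi> t)"
      by (rule continuous_on_subset[OF continuous_on_inverse_\<psi>]) auto
    show "- (1 / min p 2) > -1"
      using p by simp
    show "\<bar>1 / \<psi> x\<bar> \<le> 1 / \<mu> * (x - v0) powr - (1 / min p 2)" if x: "v0 < x" "x \<le> v0 + 1" for x
    proof -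
      have "0 < \<psi> x" "0 < (x - v0) powr (1 / min p 2)"
        using \<psi>_pos x by auto
      then have "1 / \<psi> x \<le> 1 / (\<mu> * (x - v0) powr (1 / min p 2))"
        using \<psi>_ge[OF x] \<mu> by (intro divide_left_mono mult_pos_pos) simp_all
      also have "\<dots> = 1 / \<mu> * (x - v0) powr - (1 / min p 2)"
        by (simp add: powr_minus divide_inverse)
      finally show ?thesis
        using \<open>0 < \<psi> x\<close> by simp
    qed
  qed simp
  show ?thesis
  proof (cases "b \<le> v0 + 1")
    case True
    show ?thesis
      by (rule integrable_on_subinterval[OF near]) (use True in auto)
  next
    case False
    have "continuous_on {v0 + 1..b} (\<lambda>t. 1 / \<psi> t)"
      by (rule continuous_on_subset[OF continuous_on_inverse_\<psi>]) auto
    then have "(\<lambda>t. 1 / \<psi> t) integrable_on {v0 + 1..b}"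
      by (rule integrable_continuous_interval)
    then show ?thesis
      using Henstock_Kurzweil_Integration.integrable_combine[OF _ _ near] False by simp
  qed
qed

lemma \<rho>_v0 [simp]: "\<rho> v0 = 0"
  unfolding \<rho>_def by simp

lemma continuous_on_\<rho>: "continuous_on {v0..} \<rho>"
  unfolding \<rho>_def[abs_def] using integrable_inverse_\<psi> by (rule continuous_on_integral_atLeast)

lemma \<rho>_has_real_derivative: "v0 < x \<Longrightarrow> (\<rho> has_real_derivative 1 / \<psi> x) (at x)"
  unfolding \<rho>_def[abs_def]
  using integrable_inverse_\<psi> continuous_on_inverse_\<psi>
  by (intro integral_atLeast_has_real_derivative) (auto simp: continuous_on_eq_continuous_at)

lemma \<rho>_less:
  assumes "v0 \<le> a" "a < b"
  shows "\<rho> a < \<rho> b"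
proof (rule DERIV_pos_imp_increasing_open[OF \<open>a < b\<close>])
  fix x assume "a < x" "x < b"
  then have "v0 < x"
    using assms by simp
  then show "\<exists>y. (\<rho> has_real_derivative y) (at x) \<and> 0 < y"
    using \<rho>_has_real_derivative \<psi>_pos by (intro exI[of _ "1 / \<psi> x"]) simp
next
  show "continuous_on {a..b} \<rho>"
    using assms by (intro continuous_on_subset[OF continuous_on_\<rho>]) auto
qed

lemma \<rho>_mono: "v0 \<le> a \<Longrightarrow> a \<le> b \<Longrightarrow> \<rho> a \<le> \<rho> b"
  using \<rho>_less[of a b] by (cases "a = b") auto

lemma \<rho>_ge: "v0 < x \<Longrightarrow> (x - v0) / \<psi> x \<le> \<rho> x"
proof -
  assume x: "v0 < x"
  obtain l \<xi> where \<xi>: "v0 < \<xi>" "\<xi> < x" "(\<rho> has_real_derivative l) (at \<xi>)"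
    and increment: "\<rho> x - \<rho> v0 = (x - v0) * l"
  proof -
    have "continuous_on {v0..x} \<rho>"
      by (rule continuous_on_subset[OF continuous_on_\<rho>]) auto
    moreover have "\<rho> differentiable (at t)" if "v0 < t" for t
      using \<rho>_has_real_derivative[OF that] real_differentiable_def by blast
    ultimately show ?thesis
      using MVT[OF x, of \<rho>] that by blast
  qed
  have "l = 1 / \<psi> \<xi>"
    using \<xi> \<rho>_has_real_derivative DERIV_unique by blast
  have "1 / \<psi> x \<le> 1 / \<psi> \<xi>"
    using \<xi> \<psi>_pos \<psi>_mono[of \<xi> x] by (intro divide_left_mono) auto
  then show ?thesis
    using increment \<open>l = 1 / \<psi> \<xi>\<close> x by (simp add: mult_left_mono divide_inverse)
qed

lemma \<rho>_le_tail_integral: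
  assumes x: "v0 + 1 \<le> x"
  shows "\<rho> x \<le> \<rho> (v0 + 1) + (v0 + 1) * integral {1..} (\<lambda>s. 1 / \<Gamma>_inv (F s))"
proof -
  let ?h = "\<lambda>s. 1 / \<Gamma>_inv (F s)"
  have h_int: "?h integrable_on {v0 + 1..x}"
    by (rule integrable_on_subinterval[OF integrable_inverse]) (use v0_pos in auto)
  have "\<rho> x - \<rho> (v0 + 1) = integral {v0 + 1..x} (\<lambda>t. 1 / \<psi> t)"
    unfolding \<rho>_def
    using Henstock_Kurzweil_Integration.integral_combine[OF _ _ integrable_inverse_\<psi>, of "v0 + 1" x]
      x by simp
  also have "\<dots> \<le> integral {v0 + 1..x} (\<lambda>s. (v0 + 1) * ?h s)"
  proof (rule integral_le)
    show "(\<lambda>s. (v0 + 1) * ?h s) integrable_on {v0 + 1..x}"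
      using integrable_on_cmult_left[OF h_int, of "v0 + 1"] by simp
    show "1 / \<psi> s \<le> (v0 + 1) * ?h s" if s: "s \<in> {v0 + 1..x}" for s
    proof -
      have "0 < \<Gamma>_inv (F s) / (v0 + 1)"
        using \<Gamma>_inv_pos[OF F_pos] s v0_pos by simp
      then have "1 / \<psi> s \<le> 1 / (\<Gamma>_inv (F s) / (v0 + 1))"
        using \<psi>_ge_tail[of s] s by (intro divide_left_mono mult_pos_pos) auto
      then show ?thesis
        by simp
    qed
  qed (use integrable_on_subinterval[OF integrable_inverse_\<psi>, of "v0 + 1" x] in auto)
  also have "\<dots> = (v0 + 1) * integral {v0 + 1..x} ?h"
    by (rule integral_mult_right)
  also have "\<dots> \<le> (v0 + 1) * integral {1..} ?h"
    using h_int integrable_inverse \<Gamma>_inv_pos[OF F_pos] v0_pos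
    by (intro mult_left_mono integral_subset_le) (auto simp: less_imp_le)
  finally show ?thesis
    by simp
qed

lemma bdd_above_\<rho>: "bdd_above (\<rho> ` {v0..})"
proof -
  let ?B = "\<rho> (v0 + 1) + (v0 + 1) * integral {1..} (\<lambda>s. 1 / \<Gamma>_inv (F s))"
  have "0 \<le> integral {1..} (\<lambda>s. 1 / \<Gamma>_inv (F s))"
    using integrable_inverse \<Gamma>_inv_pos[OF F_pos] by (intro integral_nonneg) (auto simp: less_imp_le)
  then have "\<rho> x \<le> ?B" if "v0 \<le> x" for x
    using \<rho>_mono[OF that, of "v0 + 1"] \<rho>_le_tail_integral[of x] v0_pos
    by (cases "x \<le> v0 + 1") (auto intro: add_increasing2)
  then show ?thesis
    by (intro bdd_aboveI) auto
qed

definition R where "R = Sup (\<rho> ` {v0..})"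

lemma \<rho>_less_R: "v0 \<le> x \<Longrightarrow> \<rho> x < R"
  unfolding R_def using \<rho>_less[of x "x + 1"] bdd_above_\<rho>
  by (smt (verit) atLeast_iff cSup_upper imageI)

lemma R_pos: "0 < R"
  using \<rho>_less_R[of v0] by simp

lemma \<rho>_image: "\<rho> ` {v0..} = {0..<R}"
proof
  show "\<rho> ` {v0..} \<subseteq> {0..<R}"
    using \<rho>_mono[of v0] \<rho>_less_R by auto
  show "{0..<R} \<subseteq> \<rho> ` {v0..}"
  proof
    fix r assume r: "r \<in> {0..<R}"
    then obtain x where x: "v0 \<le> x" "r < \<rho> x"
      unfolding R_def using less_cSupD[of "\<rho> ` {v0..}" r] by auto
    then obtain y where "v0 \<le> y" "y \<le> x" "\<rho> y = r"
      using IVT'[of \<rho> v0 r x] r continuous_on_subset[OF continuous_on_\<rho>] by force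
    then show "r \<in> \<rho> ` {v0..}"
      by auto
  qed
qed

definition vbar where "vbar = inv_into {v0..} \<rho>"
definition vbar' where "vbar' r = \<psi> (vbar r)"

lemma inj_on_\<rho>: "inj_on \<rho> {v0..}"
  using \<rho>_less by (intro strict_mono_on_imp_inj_on strict_mono_onI) auto

lemma vbar_ge: "r \<in> {0..<R} \<Longrightarrow> v0 \<le> vbar r"
  unfolding vbar_def using \<rho>_image by (metis atLeast_iff inv_into_into)

lemma \<rho>_vbar: "r \<in> {0..<R} \<Longrightarrow> \<rho> (vbar r) = r"
  unfolding vbar_def using \<rho>_image by (metis f_inv_into_f)

lemma vbar_0: "vbar 0 = v0"
  unfolding vbar_def using inv_into_f_f[OF inj_on_\<rho>, of v0] by simp

lemma vbar_gt: "r \<in> {0<..<R} \<Longrightarrow> v0 < vbar r"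
  using vbar_ge[of r] \<rho>_vbar[of r] by (cases "vbar r = v0") auto

lemma vbar_mono: "mono_on {0..<R} vbar"
proof (rule mono_onI)
  fix r s assume "r \<in> {0..<R}" "s \<in> {0..<R}" "r \<le> s"
  then show "vbar r \<le> vbar s"
    using \<rho>_less[of "vbar s" "vbar r"] vbar_ge \<rho>_vbar by force
qed

lemma vbar_tendsto_at_top: "filterlim vbar at_top (at_left R)"
  unfolding filterlim_at_top
proof
  fix Z
  define x where "x = max Z v0"
  have "\<forall>\<^sub>F r in at_left R. r \<in> {\<rho> x<..<R}"
    using \<rho>_less_R[of x] by (intro eventually_at_left_real) (simp add: x_def)
  then show "\<forall>\<^sub>F r in at_left R. Z \<le> vbar r"
  proof eventually_elim
    case (elim r)
    then have r: "r \<in> {0..<R}"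
      using \<rho>_mono[of v0 x] by (auto simp: x_def)
    have "x \<le> vbar r"
      using \<rho>_less[of "vbar r" x] vbar_ge[OF r] \<rho>_vbar[OF r] elim by force
    then show ?case
      by (simp add: x_def)
  qed
qed

lemma continuous_on_vbar: "continuous_on {0..<R} vbar"
  unfolding vbar_def \<rho>_image[symmetric]
  using continuous_on_inv_into_interval[OF _ continuous_on_\<rho> inj_on_\<rho>] by (simp add: is_interval_ci)

lemma vbar_has_real_derivative: "r \<in> {0<..<R} \<Longrightarrow> (vbar has_real_derivative vbar' r) (at r)"
proof -
  assume r: "r \<in> {0<..<R}"
  have x: "v0 < vbar r"
    using vbar_gt[OF r] .
  have "(inv_into {v0..} \<rho> has_real_derivative inverse (1 / \<psi> (vbar r))) (at r)"
  proof (rule inv_into_has_real_derivative[OF _ continuous_on_\<rho> inj_on_\<rho>])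
    show "r \<in> interior (\<rho> ` {v0..})"
      using r by (simp add: \<rho>_image)
    show "(\<rho> has_real_derivative 1 / \<psi> (vbar r)) (at (inv_into {v0..} \<rho> r))"
      using \<rho>_has_real_derivative[OF x] unfolding vbar_def .
    show "1 / \<psi> (vbar r) \<noteq> 0"
      using \<psi>_pos[OF x] by simp
  qed (simp add: is_interval_ci)
  then show ?thesis
    by (simp add: vbar'_def vbar_def)
qed

lemma vbar'_0: "vbar' 0 = 0"
  unfolding vbar'_def vbar_0 by simp

lemma vbar'_nonneg: "r \<in> {0..<R} \<Longrightarrow> 0 \<le> vbar' r"
  unfolding vbar'_def using \<psi>_nonneg vbar_ge by simp

lemma continuous_on_vbar': "continuous_on {0..<R} vbar'"
  unfolding vbar'_def[abs_def]
  by (rule continuous_on_compose2[OF continuous_on_\<psi> continuous_on_vbar]) (use vbar_ge in auto)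

lemma vbar_has_real_derivative_0: "(vbar has_real_derivative vbar' 0) (at 0 within {0..<R})"
  unfolding has_field_derivative_iff vbar'_0
proof (rule tendsto_sandwich[where f = "\<lambda>_. 0" and h = vbar'])
  have inside: "\<forall>\<^sub>F r in at 0 within {0..<R}. r \<in> {0<..<R}"
    unfolding eventually_at_filter by (rule always_eventually) auto
  then show "\<forall>\<^sub>F r in at 0 within {0..<R}. 0 \<le> (vbar r - vbar 0) / (r - 0)"
    by eventually_elim (use vbar_ge vbar_0 in auto)
  from inside show "\<forall>\<^sub>F r in at 0 within {0..<R}. (vbar r - vbar 0) / (r - 0) \<le> vbar' r"
  proof eventually_elim
    case (elim r)
    have x: "v0 < vbar r"
      using vbar_gt[OF elim] .
    have "(vbar r - v0) / \<psi> (vbar r) \<le> r"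
      using \<rho>_ge[OF x] \<rho>_vbar[of r] elim by simp
    then show ?case
      using \<psi>_pos[OF x] elim by (simp add: vbar_0 vbar'_def field_simps)
  qed
  have "(vbar' \<longlongrightarrow> vbar' 0) (at 0 within {0..<R})"
    using continuous_on_vbar' R_pos unfolding continuous_on_def by auto
  then show "(vbar' \<longlongrightarrow> 0) (at 0 within {0..<R})"
    by (simp add: vbar'_0)
qed simp

lemma \<psi>_powr_div_\<rho>_le: "v0 < x \<Longrightarrow> \<psi> x powr (p - 1) / \<rho> x \<le> f x / C"
proof -
  assume x: "v0 < x"
  define s where "s = \<psi> x"
  have s: "0 < s"
    using \<psi>_pos[OF x] by (simp add: s_def)
  have "C * s powr p \<le> \<Gamma> s"
    using \<Gamma>_ge_powr s by simp
  also have "\<dots> \<le> (x - v0) * f x"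
    using \<Gamma>_\<psi>[of x] F_diff_le[of v0 x] x v0_pos by (simp add: s_def)
  finally have Cs: "C * s powr p \<le> (x - v0) * f x" .
  have "0 < \<rho> x"
    using \<rho>_less[of v0 x] x by simp
  then have "s powr (p - 1) / \<rho> x \<le> s powr (p - 1) / ((x - v0) / s)"
    using \<rho>_ge[OF x] s x by (intro divide_left_mono) (auto simp: s_def)
  also have "\<dots> = s powr p / (x - v0)"
    using s x by (simp add: field_simps powr_diff)
  also have "\<dots> \<le> f x / C"
    using Cs C_pos x by (simp add: field_simps)
  finally show ?thesis
    by (simp add: s_def)
qed

lemma g_\<psi>_le: "v0 < x \<Longrightarrow> g (\<psi> x) \<le> f x / K"
proof -
  assume x: "v0 < x"
  define s where "s = \<psi> x"
  have s: "0 < s"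
    using \<psi>_pos[OF x] by (simp add: s_def)
  have "s * g s \<le> \<Gamma> s"
    using \<Gamma>_ge_mult_g s by simp
  also have "\<dots> \<le> (x - v0) * f x"
    using \<Gamma>_\<psi>[of x] F_diff_le[of v0 x] x v0_pos by (simp add: s_def)
  also have "\<dots> \<le> (s / K) * f x"
    using \<psi>_ge_K[of x] x K_pos f_pos[of x] v0_pos
    by (intro mult_right_mono) (auto simp: s_def field_simps)
  finally have "s * g s \<le> s * (f x / K)"
    by simp
  then have "g s \<le> f x / K"
    by (rule mult_left_le_imp_le) (use s in simp)
  then show ?thesis
    by (simp add: s_def)
qed

lemma vbar'_powr_has_real_derivative:
  assumes r: "r \<in> {0<..<R}"
  shows "((\<lambda>r. vbar' r powr (p - 1)) has_real_derivative
    (p - 1) * vbar' r powr (p - 1) * f (vbar r) / \<Gamma>' (vbar' r)) (at r)"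
proof -
  define x where "x = vbar r"
  define s where "s = vbar' r"
  have x: "v0 < x"
    using vbar_gt[OF r] by (simp add: x_def)
  have s: "0 < s"
    using \<psi>_pos[OF x] by (simp add: s_def x_def vbar'_def)
  have "(\<psi> has_real_derivative f x / \<Gamma>' s) (at (vbar r))"
    using \<psi>_has_real_derivative[OF x] by (simp add: x_def s_def vbar'_def)
  from DERIV_chain2[OF this vbar_has_real_derivative[OF r]]
  have "(vbar' has_real_derivative f x / \<Gamma>' s * s) (at r)"
    by (simp add: s_def vbar'_def[abs_def])
  then have deriv: "((\<lambda>r. vbar' r powr (p - 1)) has_real_derivative
      (p - 1) * s powr (p - 1 - 1) * (f x / \<Gamma>' s * s)) (at r)"
    using s by (auto intro!: derivative_eq_intros simp: s_def)
  have "(p - 1) * s powr (p - 1 - 1) * (f x / \<Gamma>' s * s) = (p - 1) * s powr (p - 1) * f x / \<Gamma>' s"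
  proof -
    have powr_eq: "s powr (p - 1 - 1) * s = s powr (p - 1)"
      using powr_mult_base[of s "p - 1 - 1"] s by (simp add: mult.commute)
    have "(p - 1) * s powr (p - 1 - 1) * (f x / \<Gamma>' s * s) = (p - 1) * (s powr (p - 1 - 1) * s) * f x / \<Gamma>' s"
      by (simp add: field_simps)
    also have "\<dots> = (p - 1) * s powr (p - 1) * f x / \<Gamma>' s"
      by (simp only: powr_eq)
    finally show ?thesis .
  qed
  with deriv show ?thesis
    by (simp only: x_def s_def)
qed

lemma supersolution_inequality:
  assumes r: "r \<in> {0<..<R}"
  shows "(p - 1) * vbar' r powr (p - 1) * f (vbar r) / \<Gamma>' (vbar' r)
    + (real n - 1) / r * vbar' r powr (p - 1) < f (vbar r) - g (vbar' r)"
proof -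
  define x where "x = vbar r"
  have x: "v0 < x"
    using vbar_gt[OF r] by (simp add: x_def)
  have s: "0 < vbar' r"
    using \<psi>_pos[OF x] by (simp add: x_def vbar'_def)
  have fx: "0 < f x"
    using f_pos x v0_pos by simp
  have "(p - 1) * vbar' r powr (p - 1) * f x / \<Gamma>' (vbar' r) \<le> f x / c"
    using powr_div_\<Gamma>'_le s fx by simp
  moreover have "(real n - 1) / r * vbar' r powr (p - 1) \<le> (real n - 1) * (f x / C)"
  proof -
    have "vbar' r powr (p - 1) / r \<le> f x / C"
      using \<psi>_powr_div_\<rho>_le[OF x] \<rho>_vbar[of r] r by (simp add: x_def vbar'_def)
    then have "(real n - 1) * (vbar' r powr (p - 1) / r) \<le> (real n - 1) * (f x / C)"
      using n by (intro mult_left_mono) auto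
    then show ?thesis
      by simp
  qed
  moreover have "g (vbar' r) \<le> f x / K"
    using g_\<psi>_le[OF x] by (simp add: x_def vbar'_def)
  moreover have "f x / c + (real n - 1) * (f x / C) + f x / K = (\<kappa> + 1 / K) * f x"
    unfolding \<kappa>_def by (simp add: field_simps)
  moreover have "(\<kappa> + 1 / K) * f x < f x"
    using \<kappa>_plus_inverse_K_less_1 fx by simp
  ultimately show ?thesis
    by (simp add: x_def)
qed

lemma strict_radial_supersol_vbar: "strict_radial_supersol p n f g v0 R vbar"
  unfolding strict_radial_supersol_def
proof (intro exI[of _ vbar'] conjI ballI)
  show "(vbar has_real_derivative vbar' r) (at r within {0..<R})" if "r \<in> {0..<R}" for r
  proof (cases "r = 0")
    case True
    then show ?thesis
      using vbar_has_real_derivative_0 by simp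
  next
    case False
    then show ?thesis
      using that vbar_has_real_derivative by (auto intro: has_field_derivative_at_within)
  qed
  show "\<exists>w'. ((\<lambda>s. vbar' s powr (p - 1)) has_real_derivative w') (at r)
      \<and> w' + (real n - 1) / r * vbar' r powr (p - 1) < f (vbar r) - g (vbar' r)"
    if "r \<in> {0<..<R}" for r
    using vbar'_powr_has_real_derivative[OF that] supersolution_inequality[OF that] by blast
qed (use continuous_on_vbar' vbar'_nonneg vbar_0 vbar'_0 in auto)

end

theorem lemma5p1:
  fixes p :: real and n :: nat and f g :: "real \<Rightarrow> real"
  assumes "1 < p" and "n \<ge> 1"
    and "continuous_on {0..} f" and "strict_mono_on {0..} f" and "f 0 = 0"
    and "\<exists>L. L-lipschitz_on {0..} g" and "strict_mono_on {0..} g" and "g 0 = 0"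
    and "(\<lambda>s. 1 / KO_Gamma_inv p n g (KO_F f s)) integrable_on {1..}"
  shows "\<exists>V>0. \<forall>v0\<ge>V. \<exists>R>0. \<exists>v.
           mono_on {0..<R} v \<and> strict_radial_supersol p n f g v0 R v
           \<and> filterlim v at_top (at_left R)"
proof -
  interpret keller_osserman p n f g
    by unfold_locales (use assms in auto)
  obtain V where V: "0 < V" "\<And>v0 t. V \<le> v0 \<Longrightarrow> 0 \<le> t \<Longrightarrow> \<Gamma> (K * t) \<le> F (v0 + t) - F v0"
    using \<Gamma>_le_F_increment[OF K_pos] by blast
  have "\<exists>R>0. \<exists>v. mono_on {0..<R} v \<and> strict_radial_supersol p n f g v0 R v
      \<and> filterlim v at_top (at_left R)" if "V \<le> v0" for v0
  proof -
    interpret keller_osserman_profile p n f g v0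
      using V that by unfold_locales auto
    show ?thesis
      using R_pos vbar_mono strict_radial_supersol_vbar vbar_tendsto_at_top by blast
  qed
  then show ?thesis
    using V by blast
qed

end
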